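(* Let $f:\{0,1\}^n\to\{0,1\}$ be a total Boolean function. Then $\mathsf{maxPI}(f)\le\mathsf{sumPI}(f)^4$.
   Context: With $p=\{p_x\}$ ranging over families of probability distributions on $[n]$, $$\mathsf{sumPI}(f)=\min_{p}\ \max_{x,y:\ f(x)\neq f(y)} \frac{1}{\sum_{i:\,x_i\neq y_i}\sqrt{p_x(i)p_y(i)}},\qquad \mathsf{maxPI}(f)=\min_{p}\ \max_{x,y:\ f(x)\neq f(y)} \frac{1}{\max_{i:\,x_i\neq y_i}\sqrt{p_x(i)p_y(i)}}.$$ *)

theory Defs
  imports "HOL-Analysis.Analysis"
begin

text \<open>Inputs in {0,1}^n are bool lists of length n; coordinates are 0..n-1.
  A family of probability distributions on [n], one for each input x.\<close>

definition prob_family :: "nat \<Rightarrow> (bool list \<Rightarrow> nat \<Rightarrow> real) \<Rightarrow> bool" where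
  "prob_family n p \<longleftrightarrow>
     (\<forall>x. length x = n \<longrightarrow> (\<forall>i<n. 0 \<le> p x i) \<and> (\<Sum>i<n. p x i) = 1)"

definition diff_pairs :: "nat \<Rightarrow> (bool list \<Rightarrow> bool) \<Rightarrow> (bool list \<times> bool list) set" where
  "diff_pairs n f = {(x, y). length x = n \<and> length y = n \<and> f x \<noteq> f y}"

definition diff_coords :: "nat \<Rightarrow> bool list \<Rightarrow> bool list \<Rightarrow> nat set" where
  "diff_coords n x y = {i. i < n \<and> x ! i \<noteq> y ! i}"

text \<open>Values in ennreal: 1/0 = \<infinity>; max over empty set of pairs (constant f) is 0.\<close>

definition sumPI :: "nat \<Rightarrow> (bool list \<Rightarrow> bool) \<Rightarrow> ennreal" where
  "sumPI n f = (INF p \<in> {p. prob_family n p}.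
      SUP xy \<in> diff_pairs n f.
        inverse (ennreal (\<Sum>i \<in> diff_coords n (fst xy) (snd xy).
                            sqrt (p (fst xy) i * p (snd xy) i))))"

definition maxPI :: "nat \<Rightarrow> (bool list \<Rightarrow> bool) \<Rightarrow> ennreal" where
  "maxPI n f = (INF p \<in> {p. prob_family n p}.
      SUP xy \<in> diff_pairs n f.
        inverse (ennreal (Max ((\<lambda>i. sqrt (p (fst xy) i * p (snd xy) i))
                                 ` diff_coords n (fst xy) (snd xy)))))"

end

(*
  If B_1, ..., B_k are disjoint sensitive blocks of x, then for any weight scheme p some
  block B_j has overlap sum_{i in B_j} sqrt (p_x(i) p_y(i)) <= 1/sqrt k with y = x flipped
  on B_j (AM-GM and averaging), so k <= sumPI^2. A minimal sensitive block B of x has all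
  its coordinates sensitive at x flipped on B, so also |B| <= sumPI^2. The union of a
  maximal disjoint family of minimal sensitive blocks is a certificate for x, hence every
  input has a certificate of size at most sumPI^4. Finally, the uniform weights on these
  certificates bound maxPI: certificates of inputs with different values share a
  coordinate on which the inputs disagree, and there both weights are at least 1/sumPI^4.
*)

theory Submission
  imports Defs
begin

definition flip_bits :: "nat set \<Rightarrow> bool list \<Rightarrow> bool list" where
  "flip_bits B x = map (\<lambda>i. if i \<in> B then \<not> x ! i else x ! i) [0..<length x]"

lemma length_flip_bits [simp]: "length (flip_bits B x) = length x"
  by (simp add: flip_bits_def)

lemma nth_flip_bits [simp]:
  "i < length x \<Longrightarrow> flip_bits B x ! i = (if i \<in> B then \<not> x ! i else x ! i)"
  by (simp add: flip_bits_def)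

lemma flip_bits_empty [simp]: "flip_bits {} x = x"
  by (rule nth_equalityI) auto

lemma flip_bits_flip_bits: "flip_bits A (flip_bits B x) = flip_bits (sym_diff A B) x"
  by (rule nth_equalityI) auto

lemma diff_coords_flip_bits:
  "B \<subseteq> {..<length x} \<Longrightarrow> diff_coords (length x) x (flip_bits B x) = B"
  unfolding diff_coords_def by (auto split: if_splits)

lemma flip_bits_diff_coords:
  "length z = length x \<Longrightarrow> flip_bits (diff_coords (length x) x z) x = z"
  by (rule nth_equalityI) (auto simp: diff_coords_def)

definition sensitive_block :: "nat \<Rightarrow> (bool list \<Rightarrow> bool) \<Rightarrow> bool list \<Rightarrow> nat set \<Rightarrow> bool" where
  "sensitive_block n f x B \<longleftrightarrow> B \<subseteq> {..<n} \<and> f (flip_bits B x) \<noteq> f x"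

definition minimal_sensitive_block ::
    "nat \<Rightarrow> (bool list \<Rightarrow> bool) \<Rightarrow> bool list \<Rightarrow> nat set \<Rightarrow> bool" where
  "minimal_sensitive_block n f x B \<longleftrightarrow>
     sensitive_block n f x B \<and> (\<forall>B'. B' \<subset> B \<longrightarrow> \<not> sensitive_block n f x B')"

definition certificate :: "nat \<Rightarrow> (bool list \<Rightarrow> bool) \<Rightarrow> bool list \<Rightarrow> nat set \<Rightarrow> bool" where
  "certificate n f x U \<longleftrightarrow>
     U \<subseteq> {..<n} \<and> (\<forall>z. length z = n \<longrightarrow> (\<forall>i\<in>U. z ! i = x ! i) \<longrightarrow> f z = f x)"

lemma certificateD:
  "certificate n f x U \<Longrightarrow> length z = n \<Longrightarrow> (\<And>i. i \<in> U \<Longrightarrow> z ! i = x ! i) \<Longrightarrow> f z = f x"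
  by (simp add: certificate_def)

lemma sensitive_block_nonempty: "sensitive_block n f x B \<Longrightarrow> B \<noteq> {}"
  by (auto simp: sensitive_block_def)

lemma sqrt_mult_le_scaled_mean:
  fixes a c t :: real
  assumes "0 \<le> a" "0 \<le> c" "0 < t"
  shows "sqrt (a * c) \<le> (t * a + c / t) / 2"
proof -
  have "sqrt (a * c) = sqrt ((t * a) * (c / t))" using assms by simp
  also have "\<dots> \<le> (t * a + c / t) / 2"
    using arith_geo_mean_sqrt[of "t * a" "c / t"] assms by simp
  finally show ?thesis .
qed

lemma sum_sqrt_overlaps_le_sqrt_card:
  fixes a :: "'a \<Rightarrow> real" and b :: "'a set \<Rightarrow> 'a \<Rightarrow> real"
  assumes fin: "finite F" "\<forall>B\<in>F. finite B" and dis: "disjoint F"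
    and a: "\<forall>i\<in>\<Union>F. 0 \<le> a i" "sum a (\<Union>F) \<le> 1"
    and b: "\<forall>B\<in>F. \<forall>i\<in>B. 0 \<le> b B i" "\<forall>B\<in>F. sum (b B) B \<le> 1"
  shows "(\<Sum>B\<in>F. \<Sum>i\<in>B. sqrt (a i * b B i)) \<le> sqrt (card F)"
proof (cases "F = {}")
  case False
  define t where "t = sqrt (card F)"
  have t: "0 < t" "t * t = card F"
    using fin False by (simp_all add: t_def card_gt_0_iff)
  \<comment> \<open>The scale t balances the two mass bounds, 1 for a and card F for b.\<close>
  have "(\<Sum>B\<in>F. \<Sum>i\<in>B. sqrt (a i * b B i)) \<le> (\<Sum>B\<in>F. \<Sum>i\<in>B. (t * a i + b B i / t) / 2)"
    using a(1) b(1) t(1) by (intro sum_mono sqrt_mult_le_scaled_mean) auto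
  also have "\<dots> = (t * (\<Sum>B\<in>F. \<Sum>i\<in>B. a i) + (\<Sum>B\<in>F. sum (b B) B) / t) / 2"
    by (simp add: sum.distrib sum_distrib_left flip: sum_divide_distrib)
  also have "(\<Sum>B\<in>F. \<Sum>i\<in>B. a i) = sum a (\<Union>F)"
    using sum.Union_disjoint[of F a] fin dis by (simp add: disjoint_def)
  also have "(t * sum a (\<Union>F) + (\<Sum>B\<in>F. sum (b B) B) / t) / 2 \<le> (t * 1 + card F / t) / 2"
    using a(2) b(2) t(1) sum_mono[of F "\<lambda>B. sum (b B) B" "\<lambda>_. 1"]
    by (intro divide_right_mono add_mono mult_left_mono) auto
  also have "\<dots> = t"
    using t by (simp add: field_simps)
  finally show ?thesis by (simp add: t_def)
qed simp

lemma exists_block_small_overlap: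
  fixes a :: "'a \<Rightarrow> real" and b :: "'a set \<Rightarrow> 'a \<Rightarrow> real"
  assumes "finite F" "F \<noteq> {}" "\<forall>B\<in>F. finite B" "disjoint F"
    and "\<forall>i\<in>\<Union>F. 0 \<le> a i" "sum a (\<Union>F) \<le> 1"
    and "\<forall>B\<in>F. \<forall>i\<in>B. 0 \<le> b B i" "\<forall>B\<in>F. sum (b B) B \<le> 1"
  shows "\<exists>B\<in>F. (\<Sum>i\<in>B. sqrt (a i * b B i)) \<le> 1 / sqrt (card F)"
proof (rule ccontr)
  assume "\<not> ?thesis"
  then have "(\<Sum>B\<in>F. 1 / sqrt (card F)) < (\<Sum>B\<in>F. \<Sum>i\<in>B. sqrt (a i * b B i))"
    using assms(1,2) by (intro sum_strict_mono) auto
  moreover have "(\<Sum>B\<in>F. 1 / sqrt (card F)) = sqrt (card F)"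
    using assms(1,2) by (simp add: card_gt_0_iff real_div_sqrt)
  ultimately show False
    using sum_sqrt_overlaps_le_sqrt_card[of F a b] assms by simp
qed

lemma prob_family_nonneg: "prob_family n p \<Longrightarrow> length x = n \<Longrightarrow> i < n \<Longrightarrow> 0 \<le> p x i"
  by (simp add: prob_family_def)

lemma prob_family_sum_le_1:
  assumes "prob_family n p" "length x = n" "A \<subseteq> {..<n}"
  shows "sum (p x) A \<le> 1"
proof -
  have "sum (p x) A \<le> (\<Sum>i<n. p x i)"
    using assms prob_family_nonneg[OF assms(1,2)] by (intro sum_mono2) auto
  with assms(1,2) show ?thesis
    by (simp add: prob_family_def)
qed

lemma exists_flipped_block_small_overlap:
  assumes p: "prob_family n p" and x: "length x = n"
    and F: "F \<noteq> {}" "disjoint F" "\<forall>B\<in>F. B \<subseteq> {..<n}"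
  shows "\<exists>B\<in>F. (\<Sum>i\<in>B. sqrt (p x i * p (flip_bits B x) i)) \<le> 1 / sqrt (card F)"
proof (rule exists_block_small_overlap)
  show "finite F" "\<forall>B\<in>F. finite B"
    using F(3) by (auto intro: finite_subset[of F "Pow {..<n}"] finite_subset)
  show "\<forall>i\<in>\<Union>F. 0 \<le> p x i" "\<forall>B\<in>F. \<forall>i\<in>B. 0 \<le> p (flip_bits B x) i"
    using F(3) x by (auto intro!: prob_family_nonneg[OF p])
  show "sum (p x) (\<Union>F) \<le> 1" "\<forall>B\<in>F. sum (p (flip_bits B x)) B \<le> 1"
    using F(3) x by (auto intro!: prob_family_sum_le_1[OF p])
qed (use F in auto)

lemma ennreal_le_inverse_ennreal:
  fixes c s :: real
  assumes "0 \<le> s" "0 < c" "s \<le> inverse c"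
  shows "ennreal c \<le> inverse (ennreal s)"
proof (cases "s = 0")
  case False
  with assms have "inverse (inverse c) \<le> inverse s"
    by (intro le_imp_inverse_le) auto
  with assms False show ?thesis
    by (simp add: inverse_ennreal)
qed simp

lemma sqrt_card_blocks_le_sumPI:
  assumes x: "length x = n" and F: "F \<noteq> {}" "disjoint F" "\<forall>B\<in>F. sensitive_block n f x B"
  shows "ennreal (sqrt (card F)) \<le> sumPI n f"
  unfolding sumPI_def
proof (rule INF_greatest)
  fix p assume "p \<in> {p. prob_family n p}"
  then have p: "prob_family n p"
    by simp
  have blocks: "\<forall>B\<in>F. B \<subseteq> {..<n}"
    using F(3) by (simp add: sensitive_block_def)
  obtain B where B: "B \<in> F"
    and small: "(\<Sum>i\<in>B. sqrt (p x i * p (flip_bits B x) i)) \<le> 1 / sqrt (card F)"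
    using exists_flipped_block_small_overlap[OF p x F(1,2) blocks] by blast
  define y where "y = flip_bits B x"
  have pair: "(x, y) \<in> diff_pairs n f"
    using x B F(3) by (simp add: diff_pairs_def y_def sensitive_block_def)
  have coords: "diff_coords n x y = B"
    using diff_coords_flip_bits[of B x] x B blocks by (simp add: y_def)
  have "0 \<le> (\<Sum>i\<in>B. sqrt (p x i * p y i))"
    using blocks B x unfolding y_def
    by (intro sum_nonneg real_sqrt_ge_zero mult_nonneg_nonneg prob_family_nonneg[OF p]) auto
  moreover have "0 < card F"
    using F(1) blocks finite_subset[of F "Pow {..<n}"] by (auto simp: card_gt_0_iff)
  ultimately have "ennreal (sqrt (card F)) \<le> inverse (ennreal (\<Sum>i\<in>B. sqrt (p x i * p y i)))"
    using small by (intro ennreal_le_inverse_ennreal) (simp_all add: y_def inverse_eq_divide)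
  then show "ennreal (sqrt (card F)) \<le> (SUP xy\<in>diff_pairs n f. inverse (ennreal
      (\<Sum>i\<in>diff_coords n (fst xy) (snd xy). sqrt (p (fst xy) i * p (snd xy) i))))"
    using coords by (intro SUP_upper2[OF pair]) simp
qed

lemma card_blocks_le_sumPI_sq:
  assumes "length x = n" "disjoint F" "\<forall>B\<in>F. sensitive_block n f x B"
  shows "of_nat (card F) \<le> sumPI n f ^ 2"
proof (cases "F = {}")
  case False
  have "of_nat (card F) = ennreal (sqrt (card F)) ^ 2"
    by (simp add: ennreal_power ennreal_of_nat_eq_real_of_nat)
  also have "\<dots> \<le> sumPI n f ^ 2"
    using sqrt_card_blocks_le_sumPI[OF assms(1) False assms(2,3)] by (rule power_mono) simp
  finally show ?thesis .
qed simp

lemma sensitive_singleton_of_minimal_block: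
  assumes "minimal_sensitive_block n f x B" "i \<in> B"
  shows "sensitive_block n f (flip_bits B x) {i}"
proof -
  have "flip_bits {i} (flip_bits B x) = flip_bits (B - {i}) x"
    using assms(2) by (simp add: flip_bits_flip_bits Diff_eq_empty_iff)
  moreover have "\<not> sensitive_block n f x (B - {i})" "sensitive_block n f x B"
    using assms by (auto simp: minimal_sensitive_block_def)
  ultimately show ?thesis
    using assms(2) by (auto simp: sensitive_block_def)
qed

lemma card_minimal_sensitive_block_le_sumPI_sq:
  assumes "length x = n" "minimal_sensitive_block n f x B"
  shows "of_nat (card B) \<le> sumPI n f ^ 2"
proof -
  have "card ((\<lambda>i. {i}) ` B) = card B"
    by (rule card_image) (simp add: inj_on_def)
  moreover have "disjoint ((\<lambda>i. {i}) ` B)"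
    by (auto simp: disjoint_def)
  ultimately show ?thesis
    using card_blocks_le_sumPI_sq[of "flip_bits B x" n "(\<lambda>i. {i}) ` B" f]
      sensitive_singleton_of_minimal_block[OF assms(2)] assms(1) by auto
qed

lemma exists_minimal_sensitive_subblock:
  assumes "sensitive_block n f x D"
  shows "\<exists>B\<subseteq>D. minimal_sensitive_block n f x B"
proof -
  let ?S = "{B. B \<subseteq> D \<and> sensitive_block n f x B}"
  have "finite ?S"
    using assms finite_subset[of D "{..<n}"] by (auto simp: sensitive_block_def)
  moreover have "D \<in> ?S"
    using assms by simp
  ultimately obtain B where B: "B \<subseteq> D" "sensitive_block n f x B"
    and minimal: "\<forall>B'\<in>?S. B' \<subseteq> B \<longrightarrow> B = B'"
    using finite_has_minimal[of ?S] by blast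
  have "\<not> sensitive_block n f x B'" if "B' \<subset> B" for B'
    using minimal that B(1) by blast
  with B show ?thesis
    by (auto simp: minimal_sensitive_block_def)
qed

lemma certificate_if_hits_minimal_blocks:
  assumes x: "length x = n" and U: "U \<subseteq> {..<n}"
    and hits: "\<forall>B. minimal_sensitive_block n f x B \<longrightarrow> B \<inter> U \<noteq> {}"
  shows "certificate n f x U"
  unfolding certificate_def
proof (intro conjI U allI impI)
  fix z assume z: "length z = n" "\<forall>i\<in>U. z ! i = x ! i"
  define D where "D = diff_coords n x z"
  show "f z = f x"
  proof (rule ccontr)
    assume "f z \<noteq> f x"
    then have "sensitive_block n f x D"
      using flip_bits_diff_coords[of z x] x z(1) by (auto simp: sensitive_block_def D_def diff_coords_def)
    then obtain B where "B \<subseteq> D" "minimal_sensitive_block n f x B"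
      using exists_minimal_sensitive_subblock by blast
    moreover have "D \<inter> U = {}"
      using z(2) by (auto simp: D_def diff_coords_def)
    ultimately show False
      using hits by blast
  qed
qed

lemma exists_maximal_disjoint_minimal_blocks:
  "\<exists>F. disjoint F \<and> (\<forall>B\<in>F. minimal_sensitive_block n f x B)
     \<and> (\<forall>B. minimal_sensitive_block n f x B \<longrightarrow> B \<inter> \<Union>F \<noteq> {})"
proof -
  let ?Fams = "{F. disjoint F \<and> (\<forall>B\<in>F. minimal_sensitive_block n f x B)}"
  have "?Fams \<subseteq> Pow (Pow {..<n})"
    by (auto simp: minimal_sensitive_block_def sensitive_block_def)
  then have "finite ?Fams"
    by (rule finite_subset) simp
  moreover have "{} \<in> ?Fams"
    by simp
  ultimately obtain F where F: "F \<in> ?Fams" and maximal: "\<forall>G\<in>?Fams. F \<subseteq> G \<longrightarrow> F = G"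
    using finite_has_maximal[of ?Fams] by blast
  have "B \<inter> \<Union>F \<noteq> {}" if B: "minimal_sensitive_block n f x B" for B
  proof
    assume "B \<inter> \<Union>F = {}"
    then have "insert B F \<in> ?Fams"
      using F B by (auto simp: disjoint_def)
    then have "B \<in> F"
      using maximal by blast
    with \<open>B \<inter> \<Union>F = {}\<close> have "B = {}"
      by blast
    with B show False
      using sensitive_block_nonempty by (auto simp: minimal_sensitive_block_def)
  qed
  with F show ?thesis
    by blast
qed

lemma exists_certificate_le_sumPI_pow4:
  assumes x: "length x = n"
  shows "\<exists>U. certificate n f x U \<and> of_nat (card U) \<le> sumPI n f ^ 4"
proof -
  obtain F where F: "disjoint F" "\<forall>B\<in>F. minimal_sensitive_block n f x B"
    and hits: "\<forall>B. minimal_sensitive_block n f x B \<longrightarrow> B \<inter> \<Union>F \<noteq> {}"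
    using exists_maximal_disjoint_minimal_blocks[of n f x] by blast
  have sensitive: "\<forall>B\<in>F. sensitive_block n f x B"
    using F(2) by (simp add: minimal_sensitive_block_def)
  then have "\<Union>F \<subseteq> {..<n}"
    by (auto simp: sensitive_block_def)
  then have "certificate n f x (\<Union>F)"
    using x hits by (intro certificate_if_hits_minimal_blocks)
  moreover have "of_nat (card (\<Union>F)) \<le> sumPI n f ^ 4"
  proof -
    have "of_nat (card (\<Union>F)) \<le> (of_nat (\<Sum>B\<in>F. card B) :: ennreal)"
      by (intro of_nat_mono card_Union_le_sum_card)
    also have "\<dots> = (\<Sum>B\<in>F. of_nat (card B))"
      by (rule of_nat_sum)
    also have "\<dots> \<le> (\<Sum>B\<in>F. sumPI n f ^ 2)"
      using F(2) card_minimal_sensitive_block_le_sumPI_sq[OF x] by (intro sum_mono) auto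
    also have "\<dots> = of_nat (card F) * sumPI n f ^ 2"
      by (rule sum_constant)
    also have "\<dots> \<le> sumPI n f ^ 2 * sumPI n f ^ 2"
      using card_blocks_le_sumPI_sq[OF x F(1) sensitive] by (rule mult_right_mono) simp
    also have "\<dots> = sumPI n f ^ 4"
      by (simp only: power_add[symmetric] numeral_Bit0)
    finally show ?thesis .
  qed
  ultimately show ?thesis
    by blast
qed

lemma certificates_conflict:
  assumes "certificate n f x U" "certificate n f y V" "length x = n" "length y = n" "f x \<noteq> f y"
  shows "\<exists>i\<in>U \<inter> V. x ! i \<noteq> y ! i"
proof (rule ccontr)
  assume agree: "\<not> ?thesis"
  define z where "z = map (\<lambda>j. if j \<in> U then x ! j else y ! j) [0..<n]"
  have "length z = n" "\<And>i. i \<in> U \<Longrightarrow> z ! i = x ! i" "\<And>i. i \<in> V \<Longrightarrow> z ! i = y ! i"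
    using assms(1,2) agree by (auto simp: certificate_def z_def subset_iff)
  then have "f z = f x" "f z = f y"
    using certificateD[OF assms(1)] certificateD[OF assms(2)] by blast+
  with assms(5) show False
    by simp
qed

definition uniform_weights :: "nat set \<Rightarrow> nat \<Rightarrow> real" where
  "uniform_weights W i = (if i \<in> W then 1 / real (card W) else 0)"

lemma sum_uniform_weights:
  assumes "finite A" "W \<subseteq> A" "W \<noteq> {}"
  shows "(\<Sum>i\<in>A. uniform_weights W i) = 1"
proof -
  have "finite W"
    using assms(1,2) by (rule finite_subset[rotated])
  have "(\<Sum>i\<in>A. uniform_weights W i) = (\<Sum>i\<in>A \<inter> W. 1 / real (card W))"
    unfolding uniform_weights_def using assms(1) by (rule sum.inter_restrict[symmetric])
  also have "A \<inter> W = W"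
    using assms(2) by blast
  finally show ?thesis
    using \<open>finite W\<close> assms(3) by simp
qed

lemma sqrt_mult_le_max:
  fixes a b :: real
  assumes "0 \<le> a" "0 \<le> b"
  shows "sqrt (a * b) \<le> max a b"
proof -
  have "a * b \<le> max a b * max a b"
    using assms by (intro mult_mono) auto
  then show ?thesis
    using assms by (intro real_le_lsqrt) (auto simp: power2_eq_square)
qed

lemma inverse_sqrt_uniform_weights_le_max_card:
  assumes "finite U" "finite V" "i \<in> U" "i \<in> V"
  shows "inverse (sqrt (uniform_weights U i * uniform_weights V i)) \<le> max (card U) (card V)"
proof -
  have "inverse (sqrt (uniform_weights U i * uniform_weights V i)) = sqrt (card U * card V)"
    using assms(3,4) by (simp add: uniform_weights_def real_sqrt_mult real_sqrt_divide)
  also have "\<dots> \<le> max (card U) (card V)"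
    using sqrt_mult_le_max[of "card U" "card V"] by simp
  finally show ?thesis .
qed

lemma prob_family_uniform_weights:
  assumes "0 < n" "\<And>x. length x = n \<Longrightarrow> W x \<subseteq> {..<n}"
  shows "prob_family n (\<lambda>x. uniform_weights (if W x = {} then {0} else W x))"
  unfolding prob_family_def
proof (intro allI impI conjI)
  fix x :: "bool list" and i
  show "0 \<le> uniform_weights (if W x = {} then {0} else W x) i"
    by (simp add: uniform_weights_def)
next
  fix x :: "bool list" assume "length x = n"
  then show "(\<Sum>i<n. uniform_weights (if W x = {} then {0} else W x) i) = 1"
    using assms by (intro sum_uniform_weights) auto
qed

lemma maxPI_le_certificate_size:
  assumes "0 < n"
    and cert: "\<And>x. length x = n \<Longrightarrow> certificate n f x (U x)"
    and size: "\<And>x. length x = n \<Longrightarrow> of_nat (card (U x)) \<le> k"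
  shows "maxPI n f \<le> k"
proof -
  \<comment> \<open>The dummy support {0} only makes q a distribution: conflicting certificates are nonempty.\<close>
  define q where "q x = uniform_weights (if U x = {} then {0} else U x)" for x
  have "prob_family n q"
    unfolding q_def using assms(1) cert by (intro prob_family_uniform_weights) (auto simp: certificate_def)
  then have "maxPI n f \<le> (SUP xy \<in> diff_pairs n f. inverse (ennreal
      (Max ((\<lambda>i. sqrt (q (fst xy) i * q (snd xy) i)) ` diff_coords n (fst xy) (snd xy)))))"
    unfolding maxPI_def by (intro INF_lower) simp
  also have "\<dots> \<le> k"
  proof (rule SUP_least)
    fix xy assume "xy \<in> diff_pairs n f"
    then obtain x y where xy: "xy = (x, y)" "length x = n" "length y = n" "f x \<noteq> f y"
      by (auto simp: diff_pairs_def)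
    then obtain i where i: "i \<in> U x" "i \<in> U y" "x ! i \<noteq> y ! i"
      using certificates_conflict[OF cert cert] by blast
    have finite: "finite (U x)" "finite (U y)"
      using cert[OF xy(2)] cert[OF xy(3)] finite_subset[of _ "{..<n}"]
      by (auto simp: certificate_def)
    define w where "w = sqrt (q x i * q y i)"
    define M where "M = Max ((\<lambda>j. sqrt (q x j * q y j)) ` diff_coords n x y)"
    have w: "w = sqrt (uniform_weights (U x) i * uniform_weights (U y) i)"
      using i by (auto simp: w_def q_def)
    moreover have "0 < card (U x)" "0 < card (U y)"
      using i finite by (auto simp: card_gt_0_iff)
    ultimately have "0 < w"
      using i by (simp add: uniform_weights_def)
    moreover have "w \<le> M"
      using i cert[OF xy(2)] unfolding M_def w_def
      by (intro Max_ge) (auto simp: diff_coords_def certificate_def)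
    ultimately have "inverse (ennreal M) \<le> ennreal (inverse w)"
      by (simp add: inverse_ennreal le_imp_inverse_le)
    also have "inverse w \<le> max (card (U x)) (card (U y))"
      using inverse_sqrt_uniform_weights_le_max_card[OF finite i(1,2)] by (simp add: w)
    then have "ennreal (inverse w) \<le> of_nat (max (card (U x)) (card (U y)))"
      by (simp add: ennreal_of_nat_eq_real_of_nat)
    also have "\<dots> \<le> k"
      using size xy(2,3) by (simp add: max_def)
    finally show "inverse (ennreal (Max ((\<lambda>i. sqrt (q (fst xy) i * q (snd xy) i))
        ` diff_coords n (fst xy) (snd xy)))) \<le> k"
      by (simp add: xy(1) M_def)
  qed
  finally show ?thesis .
qed

lemma sumPI_0: "sumPI 0 f = top"
proof -
  have "\<not> prob_family 0 p" for p
    unfolding prob_family_def by (auto intro: exI[of _ "[]"])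
  then show ?thesis
    by (simp add: sumPI_def)
qed

theorem mainTheorem13:
  fixes n :: nat and f :: "bool list \<Rightarrow> bool"
  shows "maxPI n f \<le> sumPI n f ^ 4"
proof (cases "n = 0")
  case True
  then show ?thesis
    by (simp add: sumPI_0)
next
  case False
  define U where "U x = (SOME U. certificate n f x U \<and> of_nat (card U) \<le> sumPI n f ^ 4)" for x
  have "certificate n f x (U x) \<and> of_nat (card (U x)) \<le> sumPI n f ^ 4" if "length x = n" for x
    unfolding U_def using exists_certificate_le_sumPI_pow4[OF that] by (rule someI_ex)
  with False show ?thesis
    by (intro maxPI_le_certificate_size) auto
qed

end
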